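(* Let $K\ge1$, $r\in[0,1]^K$, $g(\theta)=\pi_\theta^\top r$ with $\pi_\theta=\mathrm{softmax}(\theta)$, $\theta\in\mathbb{R}^K$. Let $\theta\in\mathbb{R}^K$ with $\nabla g(\theta)\neq0$, let $\eta\in(0,1/3)$, and let $\theta'=\theta+\eta\,\nabla g(\theta)/\|\nabla g(\theta)\|_2$. Then for every $\zeta\in[0,1]$, with $\theta_\zeta:=\theta+\zeta(\theta'-\theta)$, $$\|\nabla g(\theta_\zeta)\|_2\le\frac{1}{1-3\eta}\,\|\nabla g(\theta)\|_2.$$
   Context: $\mathrm{softmax}(\theta)(a)=e^{\theta(a)}/\sum_{a'}e^{\theta(a')}$. *)

theory Defs
  imports "HOL-Analysis.Analysis"
begin

definition softmax :: "real ^ 'k \<Rightarrow> 'k::finite \<Rightarrow> real" where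
  "softmax \<theta> a = exp (\<theta> $ a) / (\<Sum>a'\<in>UNIV. exp (\<theta> $ a'))"

definition expected_reward :: "real ^ 'k \<Rightarrow> real ^ 'k::finite \<Rightarrow> real" where
  "expected_reward r \<theta> = (\<Sum>a\<in>UNIV. softmax \<theta> a * r $ a)"

definition gradient :: "(real ^ 'k \<Rightarrow> real) \<Rightarrow> real ^ 'k \<Rightarrow> real ^ 'k::finite" where
  "gradient f x = (THE v. (f has_derivative (\<lambda>h. v \<bullet> h)) (at x))"

end

theory Submission
  imports Defs
begin

text \<open>The gradient of the expected reward is G(\<theta>)_a = \<pi>_a (r_a - g(\<theta>)), and differentiating it
  once more shows that the Hessian is self-bounded: in direction h it has norm at most
  3 \<parallel>G(\<theta>)\<parallel> \<parallel>h\<parallel>. Let M be the largest gradient norm on the segment from \<theta> to \<theta>', which has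
  length \<eta>. The mean value inequality bounds the variation of G on the segment by 3 M \<eta>, so
  M \<le> \<parallel>G(\<theta>)\<parallel> + 3 M \<eta>, that is M \<le> \<parallel>G(\<theta>)\<parallel> / (1 - 3 \<eta>).\<close>

lemma norm_le_of_derivative_self_bounded:
  fixes F :: "'a::{real_normed_vector, perfect_space} \<Rightarrow> 'b::real_normed_vector"
    and F' :: "'a \<Rightarrow> 'a \<Rightarrow> 'b"
  assumes deriv: "\<And>x. x \<in> closed_segment a b \<Longrightarrow> (F has_derivative F' x) (at x)"
    and bound: "\<And>x h. x \<in> closed_segment a b \<Longrightarrow> norm (F' x h) \<le> L * norm (F x) * norm h"
    and "0 \<le> L" and small: "L * norm (b - a) < 1"
    and y: "y \<in> closed_segment a b"
  shows "norm (F y) \<le> norm (F a) / (1 - L * norm (b - a))"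
proof -
  let ?S = "closed_segment a b"
  have "continuous_on ?S (\<lambda>x. norm (F x))"
    using deriv by (intro continuous_on_norm continuous_at_imp_continuous_on)
      (blast intro: has_derivative_continuous)
  then obtain z where z: "z \<in> ?S" and max: "\<And>x. x \<in> ?S \<Longrightarrow> norm (F x) \<le> norm (F z)"
    using continuous_attains_sup[OF compact_segment _ \<open>continuous_on ?S _\<close>] by auto
  define M where "M = norm (F z)"
  have "norm (F z - F a) \<le> L * M * norm (z - a)"
  proof (rule differentiable_bound[where f' = F'])
    fix x assume x: "x \<in> ?S"
    then show "(F has_derivative F' x) (at x within ?S)"
      by (blast intro: has_derivative_at_withinI deriv)
    show "onorm (F' x) \<le> L * M"
    proof (rule onorm_le)
      fix h :: 'a
      have "L * norm (F x) * norm h \<le> L * M * norm h"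
        using max[OF x] \<open>0 \<le> L\<close> by (simp add: M_def mult_left_mono mult_right_mono)
      then show "norm (F' x h) \<le> L * M * norm h"
        using bound[OF x, of h] by linarith
    qed
  qed (use z in auto)
  also have "\<dots> \<le> L * M * norm (b - a)"
    using segment_bound1[OF z] \<open>0 \<le> L\<close> by (simp add: M_def mult_left_mono)
  finally have "M \<le> norm (F a) + L * M * norm (b - a)"
    using norm_triangle_ineq2[of "F z" "F a"] by (simp add: M_def)
  then have "M \<le> norm (F a) / (1 - L * norm (b - a))"
    using small by (simp add: field_simps)
  then show ?thesis
    using max[OF y] by (simp add: M_def)
qed

lemma has_derivative_vec_componentwise:
  fixes F :: "real ^ 'n::finite \<Rightarrow> real ^ 'k::finite"
  assumes "\<And>a. ((\<lambda>y. F y $ a) has_derivative (\<lambda>h. F' h $ a)) (at x)"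
  shows "(F has_derivative F') (at x)"
proof (subst has_derivative_componentwise_within, rule ballI)
  fix i :: "real ^ 'k" assume "i \<in> Basis"
  then obtain a where "i = axis a 1"
    by (meson axis_inverse)
  then show "((\<lambda>y. F y \<bullet> i) has_derivative (\<lambda>h. F' h \<bullet> i)) (at x)"
    using assms[of a] by (simp add: inner_axis)
qed

lemma gradient_eqI:
  fixes f :: "real ^ 'k::finite \<Rightarrow> real"
  assumes "(f has_derivative (\<lambda>h. v \<bullet> h)) (at x)"
  shows "gradient f x = v"
  unfolding gradient_def
proof (rule the_equality)
  show "(f has_derivative (\<lambda>h. v \<bullet> h)) (at x)" by (fact assms)
next
  fix w assume "(f has_derivative (\<lambda>h. w \<bullet> h)) (at x)"
  then have "(\<lambda>h. w \<bullet> h) = (\<lambda>h. v \<bullet> h)"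
    using assms has_derivative_unique by blast
  then have "(w - v) \<bullet> (w - v) = 0"
    by (metis inner_diff_left right_minus_eq)
  then show "w = v" by simp
qed

lemma vec_nth_has_derivative [derivative_intros]:
  "((\<lambda>x. x $ a) has_derivative (\<lambda>h. h $ a)) F"
  by (rule bounded_linear_imp_has_derivative) (rule bounded_linear_vec_nth)

lemma softmax_pos: "0 < softmax \<theta> a"
  unfolding softmax_def by (intro divide_pos_pos sum_pos) auto

lemma sum_softmax: "(\<Sum>a\<in>UNIV. softmax \<theta> a) = 1"
proof -
  have "(\<Sum>a\<in>UNIV. exp (\<theta> $ a)) > 0" by (rule sum_pos) auto
  then show ?thesis
    by (simp add: softmax_def sum_divide_distrib[symmetric])
qed

lemma abs_expected_reward_le: "\<bar>expected_reward h \<theta>\<bar> \<le> norm h"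
proof -
  have "\<bar>expected_reward h \<theta>\<bar> \<le> (\<Sum>a\<in>UNIV. softmax \<theta> a * \<bar>h $ a\<bar>)"
    unfolding expected_reward_def
    using sum_abs[of "\<lambda>a. softmax \<theta> a * h $ a"] softmax_pos[of \<theta>]
    by (simp add: abs_mult less_imp_le)
  also have "\<dots> \<le> (\<Sum>a\<in>UNIV. softmax \<theta> a * norm h)"
    using softmax_pos[of \<theta>]
    by (intro sum_mono mult_left_mono component_le_norm_cart) (simp add: less_imp_le)
  also have "\<dots> = norm h"
    by (simp add: sum_distrib_right[symmetric] sum_softmax)
  finally show ?thesis .
qed

lemma softmax_has_derivative:
  "((\<lambda>\<theta>. softmax \<theta> a) has_derivative (\<lambda>h. softmax \<theta> a * (h $ a - expected_reward h \<theta>))) (at \<theta>)"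
proof -
  define Z where "Z = (\<Sum>b\<in>UNIV. exp (\<theta> $ b))"
  have "Z > 0" unfolding Z_def by (rule sum_pos) auto
  have "((\<lambda>\<theta>. exp (\<theta> $ a) / (\<Sum>b\<in>UNIV. exp (\<theta> $ b))) has_derivative
      (\<lambda>h. - exp (\<theta> $ a) * (inverse Z * (\<Sum>b\<in>UNIV. h $ b * exp (\<theta> $ b)) * inverse Z)
            + h $ a * exp (\<theta> $ a) / Z)) (at \<theta>)"
    using \<open>Z > 0\<close> unfolding Z_def
    by (auto intro!: derivative_eq_intros simp: fun_eq_iff field_simps)
  also have "(\<lambda>h. - exp (\<theta> $ a) * (inverse Z * (\<Sum>b\<in>UNIV. h $ b * exp (\<theta> $ b)) * inverse Z)
            + h $ a * exp (\<theta> $ a) / Z)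
      = (\<lambda>h. softmax \<theta> a * (h $ a - expected_reward h \<theta>))"
    using \<open>Z > 0\<close>
    by (simp add: softmax_def expected_reward_def Z_def[symmetric] fun_eq_iff field_simps
        sum_divide_distrib[symmetric] sum_distrib_left sum_negf)
  finally show ?thesis unfolding softmax_def .
qed

definition reward_gradient :: "real ^ 'k \<Rightarrow> real ^ 'k::finite \<Rightarrow> real ^ 'k" where
  "reward_gradient r \<theta> = (\<chi> a. softmax \<theta> a * (r $ a - expected_reward r \<theta>))"

definition reward_hessian :: "real ^ 'k \<Rightarrow> real ^ 'k \<Rightarrow> real ^ 'k::finite \<Rightarrow> real ^ 'k" where
  "reward_hessian r \<theta> h =
     (\<chi> a. reward_gradient r \<theta> $ a * (h $ a - expected_reward h \<theta>)
           - softmax \<theta> a * (reward_gradient r \<theta> \<bullet> h))"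

lemma expected_reward_has_derivative:
  "(expected_reward r has_derivative (\<lambda>h. reward_gradient r \<theta> \<bullet> h)) (at \<theta>)"
proof -
  have "(expected_reward r has_derivative
      (\<lambda>h. \<Sum>a\<in>UNIV. softmax \<theta> a * (h $ a - expected_reward h \<theta>) * r $ a)) (at \<theta>)"
    unfolding expected_reward_def[of r, abs_def]
    by (intro has_derivative_sum has_derivative_mult_left softmax_has_derivative)
  also have "(\<lambda>h. \<Sum>a\<in>UNIV. softmax \<theta> a * (h $ a - expected_reward h \<theta>) * r $ a)
      = (\<lambda>h. reward_gradient r \<theta> \<bullet> h)"
  proof
    fix h
    have "(\<Sum>a\<in>UNIV. softmax \<theta> a * (h $ a - expected_reward h \<theta>) * r $ a)
        = (\<Sum>a\<in>UNIV. softmax \<theta> a * r $ a * h $ a) - expected_reward h \<theta> * expected_reward r \<theta>"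
      by (simp add: expected_reward_def algebra_simps sum_subtractf sum_distrib_left)
    also have "\<dots> = reward_gradient r \<theta> \<bullet> h"
      by (simp add: reward_gradient_def inner_vec_def expected_reward_def[of h] algebra_simps
          sum_subtractf sum_distrib_left)
    finally show "(\<Sum>a\<in>UNIV. softmax \<theta> a * (h $ a - expected_reward h \<theta>) * r $ a)
        = reward_gradient r \<theta> \<bullet> h" .
  qed
  finally show ?thesis .
qed

lemma gradient_expected_reward: "gradient (expected_reward r) \<theta> = reward_gradient r \<theta>"
  by (rule gradient_eqI) (rule expected_reward_has_derivative)

lemma reward_gradient_has_derivative:
  "(reward_gradient r has_derivative reward_hessian r \<theta>) (at \<theta>)"
proof (rule has_derivative_vec_componentwise)
  fix a
  have "((\<lambda>\<theta>. softmax \<theta> a * (r $ a - expected_reward r \<theta>)) has_derivative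
      (\<lambda>h. softmax \<theta> a * (0 - reward_gradient r \<theta> \<bullet> h)
           + softmax \<theta> a * (h $ a - expected_reward h \<theta>) * (r $ a - expected_reward r \<theta>))) (at \<theta>)"
    by (intro has_derivative_mult has_derivative_diff has_derivative_const
        softmax_has_derivative expected_reward_has_derivative)
  then show "((\<lambda>\<theta>. reward_gradient r \<theta> $ a) has_derivative (\<lambda>h. reward_hessian r \<theta> h $ a)) (at \<theta>)"
    by (simp add: reward_gradient_def reward_hessian_def algebra_simps)
qed

lemma norm_reward_hessian_le:
  "norm (reward_hessian r \<theta> h) \<le> 3 * norm (reward_gradient r \<theta>) * norm h"
proof -
  define G where "G = reward_gradient r \<theta>"
  define u where "u = (\<chi> a. G $ a * (h $ a - expected_reward h \<theta>))"
  define p where "p = (\<chi> a. softmax \<theta> a)"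
  have "norm u \<le> norm ((2 * norm h) *\<^sub>R G)"
  proof (rule norm_le_componentwise_cart)
    fix a
    have "\<bar>h $ a - expected_reward h \<theta>\<bar> \<le> 2 * norm h"
      using component_le_norm_cart[of h a] abs_expected_reward_le[of h \<theta>] by linarith
    then show "norm (u $ a) \<le> norm (((2 * norm h) *\<^sub>R G) $ a)"
      by (simp add: u_def abs_mult mult_left_mono mult.commute)
  qed
  then have u: "norm u \<le> 2 * norm h * norm G" by simp
  have "norm p \<le> (\<Sum>a\<in>UNIV. \<bar>p $ a\<bar>)" by (rule norm_le_l1_cart)
  also have "\<dots> = 1"
    using softmax_pos[of \<theta>] by (simp add: p_def less_imp_le sum_softmax)
  finally have "\<bar>G \<bullet> h\<bar> * norm p \<le> \<bar>G \<bullet> h\<bar>"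
    by (simp add: mult_left_le)
  then have "norm ((G \<bullet> h) *\<^sub>R p) \<le> norm G * norm h"
    using Cauchy_Schwarz_ineq2[of G h] by simp
  moreover have "reward_hessian r \<theta> h = u - (G \<bullet> h) *\<^sub>R p"
    by (simp add: reward_hessian_def G_def u_def p_def vec_eq_iff)
  ultimately have "norm (reward_hessian r \<theta> h) \<le> norm u + norm G * norm h"
    using norm_triangle_ineq4[of u "(G \<bullet> h) *\<^sub>R p"] by simp
  with u show ?thesis
    by (simp add: G_def algebra_simps)
qed

theorem lemma3:
  fixes r \<theta> :: "real ^ 'k::finite" and \<eta> \<zeta> :: real
  assumes "\<forall>a. 0 \<le> r $ a \<and> r $ a \<le> 1"
    and "gradient (expected_reward r) \<theta> \<noteq> 0"
    and "0 < \<eta>" and "\<eta> < 1/3"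
    and "0 \<le> \<zeta>" and "\<zeta> \<le> 1"
  shows "let g = expected_reward r;
             \<theta>' = \<theta> + (\<eta> / norm (gradient g \<theta>)) *\<^sub>R gradient g \<theta>;
             \<theta>\<zeta> = \<theta> + \<zeta> *\<^sub>R (\<theta>' - \<theta>)
         in norm (gradient g \<theta>\<zeta>) \<le> (1 / (1 - 3 * \<eta>)) * norm (gradient g \<theta>)"
proof -
  define G where "G = reward_gradient r \<theta>"
  define \<theta>' where "\<theta>' = \<theta> + (\<eta> / norm G) *\<^sub>R G"
  have "G \<noteq> 0" using assms(2) by (simp add: G_def gradient_expected_reward)
  then have step: "norm (\<theta>' - \<theta>) = \<eta>"
    using assms(3) by (simp add: \<theta>'_def)
  have "\<theta> + \<zeta> *\<^sub>R (\<theta>' - \<theta>) \<in> closed_segment \<theta> \<theta>'"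
    using assms(5,6) by (auto simp: closed_segment_def algebra_simps intro!: exI[of _ \<zeta>])
  from norm_le_of_derivative_self_bounded[OF reward_gradient_has_derivative
      norm_reward_hessian_le _ _ this]
  have "norm (reward_gradient r (\<theta> + \<zeta> *\<^sub>R (\<theta>' - \<theta>))) \<le> norm G / (1 - 3 * \<eta>)"
    using assms(4) by (simp add: step G_def)
  then show ?thesis
    by (simp add: Let_def gradient_expected_reward G_def[symmetric] \<theta>'_def)
qed

end
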